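(* Let $p\ge5$ be a prime, let $a$ be a positive integer with $\gcd(a,p)=1$, and let $r\ge0$, $m\ge1$ be integers. Let $b_{4,r,a,m}(n)$ be the number of partitions of $n$ in which every multiplicity has the form $j(pr+a)+pk$ with $j\in\{0,1,2,3\}$ and $0\le k\le m-1$. Let $t$ be an integer such that $8ta^{-1}+1$ is a quadratic nonresidue modulo $p$, where $a^{-1}$ is the inverse of $a$ modulo $p$. Then $b_{4,r,a,m}(pn+t)\equiv0\pmod2$ for all $n\ge0$.
   Context: Multiplicity of a part means the number of times it appears in the partition. Equivalently, $\sum_{n\ge0}b_{4,r,a,m}(n)q^n=\prod_{n\ge1}\frac{(1-q^{4(pr+a)n})(1-q^{pmn})}{(1-q^{(pr+a)n})(1-q^{pn})}$. *)

theory Defs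
  imports "HOL-Number_Theory.Number_Theory"
begin

text \<open>A partition of n is encoded by its multiplicity function f (f i = number of
times the part i occurs); parts lie in {1..n}.\<close>

definition allowed_mult :: "nat \<Rightarrow> nat \<Rightarrow> nat \<Rightarrow> nat \<Rightarrow> nat \<Rightarrow> bool" where
  "allowed_mult p r a m c \<longleftrightarrow> (\<exists>j<4. \<exists>k<m. c = j * (p * r + a) + p * k)"

definition b4 :: "nat \<Rightarrow> nat \<Rightarrow> nat \<Rightarrow> nat \<Rightarrow> nat \<Rightarrow> nat" where
  "b4 p r a m n = card {f :: nat \<Rightarrow> nat.
      (\<forall>i. f i \<noteq> 0 \<longrightarrow> 1 \<le> i \<and> i \<le> n) \<and>
      (\<Sum>i=1..n. i * f i) = n \<and>
      (\<forall>i\<in>{1..n}. allowed_mult p r a m (f i))}"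

end

theory Submission
  imports Defs "HOL-Library.Z2" "HOL-Library.Disjoint_Sets"
    "HOL-Computational_Algebra.Formal_Power_Series"
begin

text \<open>Each allowed multiplicity is uniquely \<open>j (pr + a) + p k\<close> with \<open>j < 4\<close>, \<open>k < m\<close>, as \<open>p > 3\<close>
  and \<open>p \<nmid> a\<close>. So a partition counted by \<open>b(N)\<close> splits into a partition of some \<open>u\<close> with
  multiplicities \<open>j < 4\<close> and one with multiplicities \<open>k < m\<close>, where
  \<open>N = (pr + a) u + p (\<dots>) \<equiv> a u (mod p)\<close>. Writing \<open>j = s + 2 t\<close> in binary, the partitions of
  \<open>u\<close> of the first kind are counted by the coefficient of \<open>q\<^sup>u\<close> in \<open>D(q) D(q\<^sup>2)\<close>, where
  \<open>D(q) = \<Prod>(1 + q\<^sup>i)\<close>. Modulo 2, with \<open>O(q) = \<Prod>(1 + q\<^bsup>2i+1\<^esup>)\<close>, the Frobenius map gives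
  \<open>D(q) = O(q) D(q\<^sup>2)\<close> and Euler's \<open>O(q) D(q) = 1\<close>, so \<open>D(q) D(q\<^sup>2) = O(q) D(q\<^sup>4)\<close>; and a
  combinatorial Jacobi triple product (shifting Maya diagrams) gives
  \<open>O(q) = (\<Sum>\<^sub>c q\<^bsup>c(2c+1)\<^esup>) O(q\<^sup>4)\<close>. Hence \<open>D(q) D(q\<^sup>2) = \<Sum>\<^sub>c q\<^bsup>c(2c+1)\<^esup>\<close> modulo 2, and if
  \<open>b(pn + t)\<close> is odd then \<open>t \<equiv> a u (mod p)\<close> with \<open>u = c(2c + 1)\<close>, making
  \<open>8 t a\<^sup>-\<^sup>1 + 1 \<equiv> 8u + 1 = (4c + 1)\<^sup>2\<close> a square modulo \<open>p\<close>. Only \<open>p > 3\<close> and \<open>gcd(a, p) = 1\<close> are used; primality of \<open>p\<close> is not.\<close>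

unbundle fps_syntax

section \<open>Power series over \<open>GF(2)\<close>\<close>

text \<open>Keep \<open>+\<close> and \<open>*\<close> on \<open>bit\<close> as ring operations rather than \<open>XOR\<close> and \<open>AND\<close>.\<close>

declare add_bit_eq_xor [simp del] mult_bit_eq_and [simp del]

lemma bit_of_nat_eq_0_iff: "of_nat n = (0::bit) \<longleftrightarrow> even n"
  by (metis even_of_nat_iff odd_one even_zero bit_not_zero_iff)

lemma bit_mult_self [simp]: "(x::bit) * x = x"
  by (cases "x = 0") auto

lemma sum_bit_involution:
  fixes g :: "'a \<Rightarrow> bit"
  assumes "finite S" "\<And>x. x \<in> S \<Longrightarrow> \<sigma> x \<in> S" "\<And>x. x \<in> S \<Longrightarrow> \<sigma> (\<sigma> x) = x"
    and "\<And>x. x \<in> S \<Longrightarrow> g (\<sigma> x) = g x"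
  shows "sum g S = sum g {x\<in>S. \<sigma> x = x}"
proof -
  have "sum g {x\<in>S. \<sigma> x \<noteq> x} = 0"
    by (rule sum_involution_eq_0[where h = \<sigma>]) (use assms in auto)
  moreover have "sum g S = sum g {x\<in>S. \<sigma> x = x} + sum g {x\<in>S. \<sigma> x \<noteq> x}"
    using sum.If_cases[OF assms(1), of "\<lambda>x. \<sigma> x = x" g g] by (simp add: Int_def)
  ultimately show ?thesis by simp
qed

definition fps_dilate :: "nat \<Rightarrow> 'a::comm_ring_1 fps \<Rightarrow> 'a fps" where
  "fps_dilate k f = Abs_fps (\<lambda>n. if k dvd n then f $ (n div k) else 0)"

lemma fps_dilate_nth: "fps_dilate k f $ n = (if k dvd n then f $ (n div k) else 0)"
  by (simp add: fps_dilate_def)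

lemma fps_dilate_eq_compose:
  assumes "k > 0"
  shows "fps_dilate k f = f oo fps_X ^ k"
proof (rule fps_ext)
  fix n
  have "(f oo fps_X ^ k) $ n = (\<Sum>i=0..n. f $ i * (if n = k * i then 1 else 0))"
    by (simp add: fps_compose_nth power_mult[symmetric])
  also have "\<dots> = (\<Sum>i=0..n. if i = n div k \<and> k dvd n then f $ i else 0)"
    by (rule sum.cong) (use assms in auto)
  also have "\<dots> = (if k dvd n then f $ (n div k) else 0)"
    by auto
  finally show "fps_dilate k f $ n = (f oo fps_X ^ k) $ n"
    by (simp add: fps_dilate_nth)
qed

lemma fps_dilate_mult:
  "k > 0 \<Longrightarrow> fps_dilate k ((f::'a::idom fps) * g) = fps_dilate k f * fps_dilate k g"
  by (simp add: fps_dilate_eq_compose fps_compose_mult_distrib)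

lemma fps_dilate_1 [simp]: "k > 0 \<Longrightarrow> fps_dilate k 1 = 1"
  by (rule fps_ext) (auto simp: fps_dilate_nth)

lemma fps_dilate_dilate:
  assumes "k > 0" "l > 0"
  shows "fps_dilate k (fps_dilate l f) = fps_dilate (k * l) f"
proof (rule fps_ext)
  fix n
  have "k dvd n \<and> l dvd n div k \<longleftrightarrow> k * l dvd n"
    using assms dvd_div_iff_mult[of k n l] dvd_mult_left[of k l n] by (auto simp: mult.commute)
  then show "fps_dilate k (fps_dilate l f) $ n = fps_dilate (k * l) f $ n"
    by (auto simp: fps_dilate_nth div_mult2_eq)
qed

lemma bit_fps_square: "(f::bit fps) * f = fps_dilate 2 f"
proof (rule fps_ext)
  fix n
  have "(f * f) $ n = (\<Sum>i=0..n. f $ i * f $ (n - i))"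
    by (simp add: fps_mult_nth)
  also have "\<dots> = (\<Sum>i\<in>{i\<in>{0..n}. n - i = i}. f $ i * f $ (n - i))"
    by (rule sum_bit_involution) (auto simp: mult.commute)
  also have "\<dots> = (if even n then f $ (n div 2) else 0)"
  proof (cases "even n")
    case True
    then have "{i\<in>{0..n}. n - i = i} = {n div 2}" and "n - n div 2 = n div 2"
      by auto
    then show ?thesis
      using True by simp
  next
    case False
    then have no_fixpoint: "{i\<in>{0..n}. n - i = i} = {}"
      by auto presburger
    show ?thesis
      unfolding no_fixpoint using False by simp
  qed
  finally show "(f * f) $ n = fps_dilate 2 f $ n"
    by (simp add: fps_dilate_nth)
qed

lemma bit_fps_eq_1_if_dilate_fixed:
  assumes fixed: "H = fps_dilate 2 H" and "H $ 0 = (1::bit)"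
  shows "H = 1"
proof (rule fps_ext)
  fix n
  show "H $ n = 1 $ n"
  proof (induction n rule: less_induct)
    case (less n)
    have "H $ n = (if even n then H $ (n div 2) else 0)"
      by (subst fixed) (simp add: fps_dilate_nth)
    then show ?case
      using less[of "n div 2"] assms(2) by (cases "n = 0") auto
  qed
qed

section \<open>Parity generating functions of weighted sets\<close>

definition parity_gf :: "'a set \<Rightarrow> ('a \<Rightarrow> nat) \<Rightarrow> bit fps" where
  "parity_gf P w = Abs_fps (\<lambda>n. of_nat (card {x\<in>P. w x = n}))"

definition finite_fibres :: "'a set \<Rightarrow> ('a \<Rightarrow> nat) \<Rightarrow> bool" where
  "finite_fibres P w \<longleftrightarrow> (\<forall>n. finite {x\<in>P. w x = n})"

lemma parity_gf_nth: "parity_gf P w $ n = of_nat (card {x\<in>P. w x = n})"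
  by (simp add: parity_gf_def)

lemma convolution_fibre_eq:
  fixes w :: "'a \<Rightarrow> nat" and v :: "'b \<Rightarrow> nat"
  shows "{z \<in> P \<times> Q. (case z of (x, y) \<Rightarrow> w x + v y) = n} =
     (\<Union>i\<in>{0..n}. {x\<in>P. w x = i} \<times> {y\<in>Q. v y = n - i})"
  by auto

lemma finite_fibres_times:
  assumes "finite_fibres P w" "finite_fibres Q v"
  shows "finite_fibres (P \<times> Q) (\<lambda>(x, y). w x + v y)"
  using assms by (auto simp: finite_fibres_def convolution_fibre_eq)

lemma parity_gf_times:
  assumes "finite_fibres P w" "finite_fibres Q v"
  shows "parity_gf (P \<times> Q) (\<lambda>(x, y). w x + v y) = parity_gf P w * parity_gf Q v"
proof (rule fps_ext)
  fix n
  have "card (\<Union>i\<in>{0..n}. {x\<in>P. w x = i} \<times> {y\<in>Q. v y = n - i}) =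
      (\<Sum>i=0..n. card ({x\<in>P. w x = i} \<times> {y\<in>Q. v y = n - i}))"
    by (rule card_UN_disjoint) (use assms in \<open>auto simp: finite_fibres_def\<close>)
  then show "parity_gf (P \<times> Q) (\<lambda>(x, y). w x + v y) $ n = (parity_gf P w * parity_gf Q v) $ n"
    by (simp add: fps_mult_nth parity_gf_nth card_cartesian_product convolution_fibre_eq)
qed

lemma parity_gf_bij_betw:
  assumes "bij_betw h P Q" "\<And>x. x \<in> P \<Longrightarrow> v (h x) = w x"
  shows "parity_gf P w = parity_gf Q v"
proof (rule fps_ext)
  fix n
  have "bij_betw h {x\<in>P. w x = n} {y\<in>Q. v y = n}"
    using assms by (auto simp: bij_betw_def inj_on_def image_def)
  then show "parity_gf P w $ n = parity_gf Q v $ n"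
    by (simp add: parity_gf_nth bij_betw_same_card)
qed

lemma parity_gf_scale:
  assumes "k > 0"
  shows "parity_gf P (\<lambda>x. k * w x) = fps_dilate k (parity_gf P w)"
proof (rule fps_ext)
  fix n
  show "parity_gf P (\<lambda>x. k * w x) $ n = fps_dilate k (parity_gf P w) $ n"
  proof (cases "k dvd n")
    case True
    then have "{x\<in>P. k * w x = n} = {x\<in>P. w x = n div k}"
      using assms by auto
    then show ?thesis
      using True by (simp add: parity_gf_nth fps_dilate_nth)
  next
    case False
    then have no_solution: "{x\<in>P. k * w x = n} = {}"
      by auto
    show ?thesis
      unfolding parity_gf_nth fps_dilate_nth no_solution using False by simp
  qed
qed

lemma finite_fibres_scale:
  assumes "finite_fibres P w" "k > 0"
  shows "finite_fibres P (\<lambda>x. k * w x)"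
proof -
  have "{x\<in>P. k * w x = n} \<subseteq> {x\<in>P. w x = n div k}" for n
    using assms(2) by auto
  then show ?thesis
    using assms(1) unfolding finite_fibres_def by (meson finite_subset)
qed

text \<open>\<open>distinct_gf \<phi>\<close> is \<open>\<Prod>\<^sub>i (1 + q\<^bsup>\<phi> i\<^esup>)\<close> modulo 2: a finite index set \<open>S\<close> selects the
  factors contributing \<open>q\<^bsup>\<phi> i\<^esup>\<close>, \<open>i \<in> S\<close>.\<close>

definition distinct_gf :: "(nat \<Rightarrow> nat) \<Rightarrow> bit fps" where
  "distinct_gf \<phi> = parity_gf {S. finite S} (sum \<phi>)"

lemma finite_fibres_sum:
  assumes "\<And>i. i \<le> \<phi> i"
  shows "finite_fibres {S. finite S} (sum \<phi>)"
  unfolding finite_fibres_def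
proof
  fix n
  have "S \<subseteq> {..n}" if "finite S" "sum \<phi> S = n" for S
    using member_le_sum[of _ S \<phi>] assms that by (force intro: order_trans)
  then have "{S\<in>{S. finite S}. sum \<phi> S = n} \<subseteq> Pow {..n}"
    by auto
  then show "finite {S\<in>{S. finite S}. sum \<phi> S = n}"
    by (rule finite_subset) simp
qed

lemma distinct_gf_scale:
  assumes "k > 0"
  shows "distinct_gf (\<lambda>i. k * \<phi> i) = fps_dilate k (distinct_gf \<phi>)"
proof -
  have "sum (\<lambda>i. k * \<phi> i) = (\<lambda>S. k * sum \<phi> S)"
    by (simp add: fun_eq_iff sum_distrib_left)
  then show ?thesis
    by (simp add: distinct_gf_def parity_gf_scale[OF assms])
qed

lemma distinct_gf_nth_0:
  assumes "\<And>i. 0 < \<phi> i"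
  shows "distinct_gf \<phi> $ 0 = 1"
proof -
  have "{S\<in>{S. finite S}. sum \<phi> S = 0} = {{}}"
    using assms by auto (metis less_irrefl)
  then show ?thesis
    by (simp add: distinct_gf_def parity_gf_nth)
qed

lemma bij_even_odd_union:
  "bij_betw (\<lambda>(S1, S2). (\<lambda>i. 2 * i) ` S1 \<union> (\<lambda>i. 2 * i + 1) ` S2)
     ({S. finite S} \<times> {S. finite S}) {S :: nat set. finite S}"
proof -
  let ?ev = "\<lambda>i::nat. 2 * i" and ?od = "\<lambda>i::nat. 2 * i + 1"
  have "?ev -` (?ev ` S1 \<union> ?od ` S2) = S1" "?od -` (?ev ` S1 \<union> ?od ` S2) = S2" for S1 S2
    by auto presburger+
  moreover have "?ev ` (?ev -` S) \<union> ?od ` (?od -` S) = S" for S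
    by (auto simp: image_iff) presburger
  ultimately show ?thesis
    by (intro bij_betw_byWitness[where f' = "\<lambda>S. (?ev -` S, ?od -` S)"])
      (auto intro: finite_vimageI simp: inj_on_def)
qed

lemma distinct_gf_even_odd:
  assumes "\<And>i. i \<le> \<phi> i"
  shows "distinct_gf \<phi> = distinct_gf (\<lambda>i. \<phi> (2 * i)) * distinct_gf (\<lambda>i. \<phi> (2 * i + 1))"
proof -
  have weight: "sum \<phi> ((\<lambda>i. 2 * i) ` S1 \<union> (\<lambda>i. 2 * i + 1) ` S2) =
      sum (\<lambda>i. \<phi> (2 * i)) S1 + sum (\<lambda>i. \<phi> (2 * i + 1)) S2"
    if "finite S1" "finite S2" for S1 S2
  proof -
    have "(\<lambda>i. 2 * i) ` S1 \<inter> (\<lambda>i. 2 * i + 1) ` S2 = {}"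
      by auto presburger
    then show ?thesis
      using that by (simp add: sum.union_disjoint sum.reindex inj_on_def)
  qed
  have "distinct_gf \<phi> = parity_gf ({S. finite S} \<times> {S. finite S})
      (\<lambda>(S1, S2). sum (\<lambda>i. \<phi> (2 * i)) S1 + sum (\<lambda>i. \<phi> (2 * i + 1)) S2)"
    unfolding distinct_gf_def
    by (rule parity_gf_bij_betw[OF bij_even_odd_union, symmetric]) (use weight in auto)
  also have "\<dots> = distinct_gf (\<lambda>i. \<phi> (2 * i)) * distinct_gf (\<lambda>i. \<phi> (2 * i + 1))"
    unfolding distinct_gf_def
  proof (intro parity_gf_times finite_fibres_sum)
    show "i \<le> \<phi> (2 * i)" "i \<le> \<phi> (2 * i + 1)" for i
      using assms[of "2 * i"] assms[of "2 * i + 1"] by auto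
  qed
  finally show ?thesis .
qed

section \<open>Partitions into distinct parts modulo 2\<close>

definition distinct_parts :: "bit fps" where
  "distinct_parts = distinct_gf Suc"

definition odd_distinct_parts :: "bit fps" where
  "odd_distinct_parts = distinct_gf (\<lambda>i. 2 * i + 1)"

lemma distinct_parts_eq: "distinct_parts = odd_distinct_parts * fps_dilate 2 distinct_parts"
proof -
  have "distinct_parts = distinct_gf (\<lambda>i. Suc (2 * i)) * distinct_gf (\<lambda>i. Suc (2 * i + 1))"
    unfolding distinct_parts_def by (rule distinct_gf_even_odd) simp
  also have "(\<lambda>i. Suc (2 * i)) = (\<lambda>i. 2 * i + 1)"
    by simp
  also have "(\<lambda>i. Suc (2 * i + 1)) = (\<lambda>i. 2 * Suc i)"
    by simp
  also have "distinct_gf (\<lambda>i. 2 * Suc i) = fps_dilate 2 distinct_parts"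
    unfolding distinct_parts_def by (rule distinct_gf_scale) simp
  finally show ?thesis
    by (simp only: odd_distinct_parts_def)
qed

text \<open>Euler's theorem modulo 2: the product is fixed by the Frobenius map \<open>fps_dilate 2\<close>
  and has constant term 1.\<close>

lemma odd_distinct_parts_mult_distinct_parts: "odd_distinct_parts * distinct_parts = 1"
proof (rule bit_fps_eq_1_if_dilate_fixed)
  have "odd_distinct_parts * distinct_parts =
      (odd_distinct_parts * odd_distinct_parts) * fps_dilate 2 distinct_parts"
    by (subst distinct_parts_eq) (simp add: mult.assoc)
  also have "\<dots> = fps_dilate 2 (odd_distinct_parts * distinct_parts)"
    by (simp add: bit_fps_square fps_dilate_mult)
  finally show "odd_distinct_parts * distinct_parts = fps_dilate 2 (odd_distinct_parts * distinct_parts)" .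
  show "(odd_distinct_parts * distinct_parts) $ 0 = 1"
    by (simp add: odd_distinct_parts_def distinct_parts_def distinct_gf_nth_0)
qed

lemma distinct_parts_mult_dilate:
  "distinct_parts * fps_dilate 2 distinct_parts = odd_distinct_parts * fps_dilate 4 distinct_parts"
proof -
  have "distinct_parts * fps_dilate 2 distinct_parts =
      odd_distinct_parts * (fps_dilate 2 distinct_parts * fps_dilate 2 distinct_parts)"
    by (subst (1) distinct_parts_eq) (simp add: mult.assoc)
  then show ?thesis
    by (simp add: bit_fps_square fps_dilate_dilate)
qed

lemma odd_distinct_parts_eq:
  "odd_distinct_parts = distinct_gf (\<lambda>i. 4 * i + 3) * distinct_gf (\<lambda>i. 4 * i + 1)"
proof -
  have "odd_distinct_parts =
      distinct_gf (\<lambda>i. 2 * (2 * i) + 1) * distinct_gf (\<lambda>i. 2 * (2 * i + 1) + 1)"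
    unfolding odd_distinct_parts_def by (rule distinct_gf_even_odd) simp
  also have "(\<lambda>i. 2 * (2 * i) + 1) = (\<lambda>i::nat. 4 * i + 1)"
    by simp
  also have "(\<lambda>i. 2 * (2 * i + 1) + 1) = (\<lambda>i::nat. 4 * i + 3)"
    by (simp add: fun_eq_iff)
  finally show ?thesis
    by (simp only: mult.commute)
qed

definition pair_weight :: "nat set \<times> nat set \<Rightarrow> nat" where
  "pair_weight = (\<lambda>(A, B). sum (\<lambda>i. 4 * i + 3) A + sum (\<lambda>j. 4 * j + 1) B)"

definition charge :: "nat set \<times> nat set \<Rightarrow> int" where
  "charge = (\<lambda>(A, B). int (card A) - int (card B))"

definition charge_count :: "int \<Rightarrow> int \<Rightarrow> nat" where
  "charge_count c s = card {x \<in> {S. finite S} \<times> {S. finite S}. charge x = c \<and> int (pair_weight x) = s}"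

text \<open>Read \<open>A\<close> as particles on the sites \<open>0, 1, 2, \<dots>\<close> and \<open>B\<close> as holes on the sites
  \<open>-1, -2, \<dots>\<close> of a Maya diagram; \<open>maya_shift\<close> translates the diagram by one site.\<close>

definition maya_shift :: "nat set \<times> nat set \<Rightarrow> nat set \<times> nat set" where
  "maya_shift = (\<lambda>(A, B). ((if 0 \<in> B then {} else {0}) \<union> Suc ` A, (\<lambda>j. j - 1) ` (B - {0})))"

lemma Suc_image_pred_image: "Suc ` ((\<lambda>j. j - 1) ` (B - {0})) = B - {0}"
proof -
  have "Suc (j - 1) = j" if "j \<in> B - {0}" for j
    using that by simp
  then show ?thesis
    by (force simp: image_image)
qed

lemma card_Suc_image [simp]: "card (Suc ` A) = card A"
  by (simp add: card_image)

lemma maya_shift_inverse: "prod.swap (maya_shift (prod.swap (maya_shift x))) = x"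
proof (cases x)
  case (Pair A B)
  have "(if 0 \<in> (if 0 \<in> B then {} else {0}) \<union> Suc ` A then {} else {0}) \<union> (B - {0}) = B"
    by auto
  then show ?thesis
    by (simp add: Pair maya_shift_def Suc_image_pred_image image_image Un_Diff)
qed

lemma maya_shift_charge_weight:
  assumes "finite A" "finite B"
  shows "charge (maya_shift (A, B)) = charge (A, B) + 1"
    and "int (pair_weight (maya_shift (A, B))) = int (pair_weight (A, B)) + 4 * charge (A, B) + 3"
proof -
  define B' where "B' = (\<lambda>j. j - 1) ` (B - {0})"
  define z where "z = (if 0 \<in> B then 0 else 1 :: nat)"
  have B: "B - {0} = Suc ` B'" "finite B'"
    using assms(2) unfolding B'_def by (simp_all only: Suc_image_pred_image) simp
  have card_B: "card B = card B' + (1 - z)"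
    using B(1) assms(2) card.remove[of B 0] by (cases "0 \<in> B") (auto simp: z_def)
  have "sum (\<lambda>j. 4 * j + 1) (Suc ` B') = sum (\<lambda>j. 4 * j + 1) B' + 4 * card B'"
    by (simp add: sum.reindex sum.distrib sum_Suc)
  then have weight_B: "sum (\<lambda>j. 4 * j + 1) B = sum (\<lambda>j. 4 * j + 1) B' + 4 * card B' + (1 - z)"
    using B(1) assms(2) sum.remove[of B 0 "\<lambda>j. 4 * j + 1"] by (cases "0 \<in> B") (auto simp: z_def)
  have shift: "maya_shift (A, B) = ((if z = 0 then {} else {0}) \<union> Suc ` A, B')"
    by (simp add: maya_shift_def z_def B'_def)
  have card_A: "card ((if z = 0 then {} else {0}) \<union> Suc ` A) = card A + z"
    using assms(1) by (auto simp: z_def)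
  have weight_A: "sum (\<lambda>i. 4 * i + 3) ((if z = 0 then {} else {0}) \<union> Suc ` A) =
      sum (\<lambda>i. 4 * i + 3) A + 4 * card A + 3 * z"
    using assms(1) by (auto simp: z_def sum.reindex sum.distrib)
  have "z \<le> 1"
    by (simp add: z_def)
  then have "card (fst (maya_shift (A, B))) + card B = card A + 1 + card (snd (maya_shift (A, B)))"
    and "pair_weight (maya_shift (A, B)) + 4 * card B = pair_weight (A, B) + 4 * card A + 3"
    using card_A card_B weight_A weight_B by (simp_all add: shift pair_weight_def)
  then show "charge (maya_shift (A, B)) = charge (A, B) + 1"
    and "int (pair_weight (maya_shift (A, B))) = int (pair_weight (A, B)) + 4 * charge (A, B) + 3"
    by (simp_all add: charge_def split_beta)
qed

lemma maya_shift_finite: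
  "x \<in> {S. finite S} \<times> {S. finite S} \<Longrightarrow> maya_shift x \<in> {S. finite S} \<times> {S. finite S}"
  by (auto simp: maya_shift_def)

lemma bij_maya_shift: "bij_betw maya_shift ({S. finite S} \<times> {S. finite S}) ({S. finite S} \<times> {S. finite S})"
proof (rule bij_betw_byWitness[where f' = "prod.swap \<circ> maya_shift \<circ> prod.swap"])
  have "maya_shift (prod.swap (maya_shift (prod.swap y))) = y" for y
    using maya_shift_inverse[of "prod.swap y"] by (metis swap_swap)
  then show "\<forall>y\<in>{S. finite S} \<times> {S. finite S}. maya_shift ((prod.swap \<circ> maya_shift \<circ> prod.swap) y) = y"
    by simp
  show "\<forall>x\<in>{S. finite S} \<times> {S. finite S}. (prod.swap \<circ> maya_shift \<circ> prod.swap) (maya_shift x) = x"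
    by (simp add: maya_shift_inverse)
  show "maya_shift ` ({S. finite S} \<times> {S. finite S}) \<subseteq> {S. finite S} \<times> {S. finite S}"
    using maya_shift_finite by blast
  show "(prod.swap \<circ> maya_shift \<circ> prod.swap) ` ({S. finite S} \<times> {S. finite S})
      \<subseteq> {S. finite S} \<times> {S. finite S}"
    using maya_shift_finite by force
qed

lemma card_filter_bij_betw:
  assumes bij: "bij_betw h X X" and P_Q: "\<And>x. x \<in> X \<Longrightarrow> P (h x) \<longleftrightarrow> Q x"
  shows "card {x\<in>X. P x} = card {x\<in>X. Q x}"
proof -
  have "h ` {x\<in>X. Q x} = {y\<in>X. P y}"
  proof (intro equalityI subsetI)
    fix y
    assume "y \<in> {y\<in>X. P y}"
    moreover obtain x where "x \<in> X" "y = h x"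
      using bij \<open>y \<in> {y\<in>X. P y}\<close> by (auto simp: bij_betw_def)
    ultimately show "y \<in> h ` {x\<in>X. Q x}"
      using P_Q by auto
  qed (use bij P_Q bij_betw_apply in fastforce)
  then have "bij_betw h {x\<in>X. Q x} {y\<in>X. P y}"
    by (intro bij_betw_subset[OF bij]) auto
  then show ?thesis
    by (simp add: bij_betw_same_card)
qed

lemma charge_count_shift: "charge_count c s = charge_count (c + 1) (s + 4 * c + 3)"
  unfolding charge_count_def
  by (rule card_filter_bij_betw[OF bij_maya_shift, symmetric])
    (auto simp: maya_shift_charge_weight)

lemma charge_count_eq: "charge_count c s = charge_count 0 (s - (2 * c\<^sup>2 + c))"
proof (induction c arbitrary: s rule: int_induct[where k = 0])
  case base
  then show ?case by simp
next
  case (step1 c)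
  have "charge_count (c + 1) s = charge_count c (s - 4 * c - 3)"
    using charge_count_shift[of c "s - 4 * c - 3"] by simp
  also have "\<dots> = charge_count 0 (s - (2 * (c + 1)\<^sup>2 + (c + 1)))"
    by (simp add: step1.IH power2_eq_square algebra_simps)
  finally show ?case .
next
  case (step2 c)
  have "charge_count (c - 1) s = charge_count c (s + 4 * (c - 1) + 3)"
    using charge_count_shift[of "c - 1" s] by simp
  also have "\<dots> = charge_count 0 (s - (2 * (c - 1)\<^sup>2 + (c - 1)))"
    by (simp add: step2.IH power2_eq_square algebra_simps)
  finally show ?case .
qed

lemma card_eq_sum_card_fibres:
  assumes "finite {x\<in>X. Q x}" "finite I" "\<And>x. x \<in> X \<Longrightarrow> Q x \<Longrightarrow> f x \<in> I"
  shows "card {x\<in>X. Q x} = (\<Sum>m\<in>I. card {x\<in>X. f x = m \<and> Q x})"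
proof -
  have "{x\<in>X. Q x} = (\<Union>m\<in>I. {x\<in>X. f x = m \<and> Q x})"
    using assms(3) by auto
  then show ?thesis
    using assms(1,2) by (auto intro!: card_UN_disjoint intro: finite_subset[OF _ assms(1)])
qed

lemma card_le_sum: "(\<And>i. 1 \<le> \<phi> i) \<Longrightarrow> card A \<le> sum \<phi> A"
  using sum_bounded_below[of A 1 \<phi>] by simp

lemma abs_charge_le:
  assumes "\<And>i. 1 \<le> \<phi> i" "\<And>i. 1 \<le> \<psi> i"
  shows "\<bar>charge (A, B)\<bar> \<le> int (sum \<phi> A + sum \<psi> B)"
proof -
  have "card A + card B \<le> sum \<phi> A + sum \<psi> B"
    using assms by (intro add_mono card_le_sum)
  then have "int (card A) + int (card B) \<le> int (sum \<phi> A) + int (sum \<psi> B)"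
    by (simp only: of_nat_add[symmetric] of_nat_le_iff)
  then show ?thesis
    by (simp add: charge_def del: of_nat_sum)
qed

lemma abs_charge_le_pair_weight: "\<bar>charge x\<bar> \<le> int (pair_weight x)"
proof (cases x)
  case (Pair A B)
  show ?thesis
    unfolding Pair pair_weight_def prod.case by (rule abs_charge_le) simp_all
qed

lemma charge_count_neg: "s < 0 \<Longrightarrow> charge_count c s = 0"
  by (auto simp: charge_count_def)

lemma finite_fibres_pair_weight: "finite_fibres ({S. finite S} \<times> {S. finite S}) pair_weight"
  unfolding pair_weight_def by (intro finite_fibres_times finite_fibres_sum) simp_all

lemma odd_distinct_parts_eq_parity_gf:
  "odd_distinct_parts = parity_gf ({S. finite S} \<times> {S. finite S}) pair_weight"
  unfolding odd_distinct_parts_eq distinct_gf_def pair_weight_def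
  by (intro parity_gf_times[symmetric] finite_fibres_sum) simp_all

text \<open>The Jacobi triple product modulo 2, coefficientwise: split the pairs by charge.\<close>

lemma odd_distinct_parts_nth:
  assumes "int n \<le> K"
  shows "odd_distinct_parts $ n = (\<Sum>c\<in>{-K..K}. of_nat (charge_count 0 (int n - (2 * c\<^sup>2 + c))))"
proof -
  let ?X = "{S. finite S} \<times> {S. finite S}"
  have "card {x\<in>?X. pair_weight x = n} = (\<Sum>c\<in>{-K..K}. card {x\<in>?X. charge x = c \<and> pair_weight x = n})"
  proof (rule card_eq_sum_card_fibres)
    show "finite {x\<in>?X. pair_weight x = n}"
      using finite_fibres_pair_weight by (simp add: finite_fibres_def)
    show "charge x \<in> {-K..K}" if "x \<in> ?X" "pair_weight x = n" for x
      using abs_charge_le_pair_weight[of x] that assms by auto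
  qed simp
  also have "\<dots> = (\<Sum>c\<in>{-K..K}. charge_count c (int n))"
    by (simp add: charge_count_def)
  also have "\<dots> = (\<Sum>c\<in>{-K..K}. charge_count 0 (int n - (2 * c\<^sup>2 + c)))"
    by (intro sum.cong refl charge_count_eq)
  finally show ?thesis
    by (simp add: odd_distinct_parts_eq_parity_gf parity_gf_nth)
qed

definition neutral_gf :: "bit fps" where
  "neutral_gf = parity_gf {x \<in> {S. finite S} \<times> {S. finite S}. charge x = 0} pair_weight"

lemma neutral_gf_nth: "neutral_gf $ n = of_nat (charge_count 0 (int n))"
proof -
  have "{x\<in>{x \<in> {S. finite S} \<times> {S. finite S}. charge x = 0}. pair_weight x = n} =
      {x \<in> {S. finite S} \<times> {S. finite S}. charge x = 0 \<and> int (pair_weight x) = int n}"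
    by auto
  then show ?thesis
    by (simp add: neutral_gf_def parity_gf_nth charge_count_def)
qed

definition theta_poly :: "int \<Rightarrow> bit fps" where
  "theta_poly K = (\<Sum>c\<in>{-K..K}. fps_X ^ nat (2 * c\<^sup>2 + c))"

lemma triangular_nonneg: "0 \<le> 2 * c\<^sup>2 + (c::int)"
proof (cases "c \<ge> 0")
  case False
  then have "0 \<le> c * (2 * c + 1)"
    by (intro mult_nonpos_nonpos) auto
  then show ?thesis
    by (simp add: power2_eq_square algebra_simps)
qed simp

lemma theta_poly_mult_neutral_gf_nth:
  "(theta_poly K * neutral_gf) $ n = (\<Sum>c\<in>{-K..K}. of_nat (charge_count 0 (int n - (2 * c\<^sup>2 + c))))"
proof -
  have "(fps_X ^ nat (2 * c\<^sup>2 + c) * neutral_gf) $ n = of_nat (charge_count 0 (int n - (2 * c\<^sup>2 + c)))"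
    for c
    using triangular_nonneg[of c]
    by (cases "n < nat (2 * c\<^sup>2 + c)") (simp_all add: fps_X_power_mult_nth charge_count_neg neutral_gf_nth of_nat_diff)
  then show ?thesis
    by (simp add: theta_poly_def sum_distrib_right fps_sum_nth)
qed

lemma theta_poly_nth_nonzero_imp_triangular: "theta_poly K $ u \<noteq> 0 \<Longrightarrow> \<exists>c. 2 * c\<^sup>2 + c = int u"
proof -
  assume "theta_poly K $ u \<noteq> 0"
  then have "(\<Sum>c\<in>{-K..K}. if u = nat (2 * c\<^sup>2 + c) then 1 else 0) \<noteq> (0::bit)"
    by (simp add: theta_poly_def fps_sum_nth)
  moreover have "(\<Sum>c\<in>{-K..K}. if u = nat (2 * c\<^sup>2 + c) then 1 else 0) = (0::bit)"
    if "\<forall>c. u \<noteq> nat (2 * c\<^sup>2 + c)"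
    using that by (intro sum.neutral) auto
  ultimately obtain c where "u = nat (2 * c\<^sup>2 + c)"
    by blast
  then show ?thesis
    using triangular_nonneg[of c] by auto
qed

definition even_pair_weight :: "nat set \<times> nat set \<Rightarrow> nat" where
  "even_pair_weight = (\<lambda>(A, B). sum (\<lambda>i. 4 * i + 2) A + sum (\<lambda>i. 4 * i + 2) B)"

lemma even_pair_weight_eq: "int (even_pair_weight x) = int (pair_weight x) - charge x"
  by (cases x) (simp add: even_pair_weight_def pair_weight_def charge_def sum.distrib)

lemma dilate_odd_distinct_parts_eq_parity_gf:
  "fps_dilate 4 odd_distinct_parts = parity_gf ({S. finite S} \<times> {S. finite S}) even_pair_weight"
proof -
  have "distinct_gf (\<lambda>i. 4 * i + 2) = fps_dilate 2 odd_distinct_parts"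
    using distinct_gf_scale[of 2 "\<lambda>i. 2 * i + 1"] by (simp add: odd_distinct_parts_def)
  then show ?thesis
    unfolding even_pair_weight_def distinct_gf_def
    by (subst parity_gf_times) (simp_all add: finite_fibres_sum bit_fps_square fps_dilate_dilate)
qed

lemma dilate_odd_distinct_parts_nth:
  assumes "int v \<le> K"
  shows "fps_dilate 4 odd_distinct_parts $ v = (\<Sum>c\<in>{-K..K}. of_nat (charge_count 0 (int v - 2 * c\<^sup>2)))"
proof -
  let ?X = "{S. finite S} \<times> {S. finite S}"
  have "card {x\<in>?X. even_pair_weight x = v} =
      (\<Sum>c\<in>{-K..K}. card {x\<in>?X. charge x = c \<and> even_pair_weight x = v})"
  proof (rule card_eq_sum_card_fibres)
    have "finite_fibres ?X even_pair_weight"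
      unfolding even_pair_weight_def by (intro finite_fibres_times finite_fibres_sum) simp_all
    then show "finite {x\<in>?X. even_pair_weight x = v}"
      by (simp add: finite_fibres_def)
    have charge_bound: "\<bar>charge x\<bar> \<le> int (even_pair_weight x)" for x
      unfolding even_pair_weight_def by (cases x) (simp only: prod.case, rule abs_charge_le, simp_all)
    show "charge x \<in> {-K..K}" if "even_pair_weight x = v" for x
      using that charge_bound[of x] assms by (simp add: abs_le_iff)
  qed simp
  also have "\<dots> = (\<Sum>c\<in>{-K..K}. charge_count c (int v + c))"
  proof (intro sum.cong refl)
    fix c
    have "even_pair_weight x = v \<longleftrightarrow> int (pair_weight x) = int v + charge x" for x
      using even_pair_weight_eq[of x] by linarith
    then show "card {x\<in>?X. charge x = c \<and> even_pair_weight x = v} = charge_count c (int v + c)"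
      unfolding charge_count_def by (intro arg_cong[where f = card]) auto
  qed
  also have "\<dots> = (\<Sum>c\<in>{-K..K}. charge_count 0 (int v - 2 * c\<^sup>2))"
    by (intro sum.cong refl) (simp add: charge_count_eq[of _ "int v + _"])
  finally show ?thesis
    by (simp add: dilate_odd_distinct_parts_eq_parity_gf parity_gf_nth)
qed

text \<open>Modulo 2 the terms for charge \<open>c\<close> and \<open>-c\<close> cancel, leaving the charge-0 pairs.\<close>

lemma neutral_gf_eq: "neutral_gf = fps_dilate 4 odd_distinct_parts"
proof (rule fps_ext)
  fix v
  have "fps_dilate 4 odd_distinct_parts $ v =
      (\<Sum>c\<in>{-int v..int v}. of_nat (charge_count 0 (int v - 2 * c\<^sup>2)))"
    by (rule dilate_odd_distinct_parts_nth) simp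
  also have "\<dots> = (\<Sum>c\<in>{c\<in>{-int v..int v}. - c = c}. (of_nat (charge_count 0 (int v - 2 * c\<^sup>2)) :: bit))"
    by (rule sum_bit_involution) auto
  also have "{c\<in>{-int v..int v}. - c = c} = {0}"
    by auto
  finally show "neutral_gf $ v = fps_dilate 4 odd_distinct_parts $ v"
    by (simp add: neutral_gf_nth)
qed

lemma distinct_parts_mult_dilate_nth_nonzero_imp_triangular:
  assumes "(distinct_parts * fps_dilate 2 distinct_parts) $ u \<noteq> 0"
  shows "\<exists>c. 2 * c\<^sup>2 + c = int u"
proof -
  define K where "K = int u"
  have neutral_inverse: "neutral_gf * fps_dilate 4 distinct_parts = 1"
    by (simp add: neutral_gf_eq fps_dilate_mult[symmetric] odd_distinct_parts_mult_distinct_parts)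
  have "(distinct_parts * fps_dilate 2 distinct_parts) $ u =
      (\<Sum>i=0..u. odd_distinct_parts $ i * fps_dilate 4 distinct_parts $ (u - i))"
    by (simp add: distinct_parts_mult_dilate fps_mult_nth)
  also have "\<dots> = (\<Sum>i=0..u. (theta_poly K * neutral_gf) $ i * fps_dilate 4 distinct_parts $ (u - i))"
    by (intro sum.cong refl) (simp add: K_def odd_distinct_parts_nth theta_poly_mult_neutral_gf_nth)
  also have "\<dots> = theta_poly K $ u"
    by (simp add: fps_mult_nth[symmetric] mult.assoc neutral_inverse)
  finally show ?thesis
    using assms theta_poly_nth_nonzero_imp_triangular by metis
qed

definition distinct_pair_weight :: "nat set \<times> nat set \<Rightarrow> nat" where
  "distinct_pair_weight = (\<lambda>(S, T). sum Suc S + 2 * sum Suc T)"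

lemma odd_card_distinct_pairs_imp_triangular:
  assumes "odd (card {x \<in> {S. finite S} \<times> {S. finite S}. distinct_pair_weight x = u})"
  shows "\<exists>c. 2 * c\<^sup>2 + c = int u"
proof (rule distinct_parts_mult_dilate_nth_nonzero_imp_triangular)
  have "distinct_parts * fps_dilate 2 distinct_parts =
      parity_gf {S. finite S} (sum Suc) * parity_gf {S. finite S} (\<lambda>T. 2 * sum Suc T)"
    by (simp add: distinct_parts_def distinct_gf_def parity_gf_scale)
  also have "\<dots> = parity_gf ({S. finite S} \<times> {S. finite S}) distinct_pair_weight"
    unfolding distinct_pair_weight_def
    by (intro parity_gf_times[symmetric] finite_fibres_scale finite_fibres_sum) simp_all
  finally show "(distinct_parts * fps_dilate 2 distinct_parts) $ u \<noteq> 0"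
    using assms by (simp add: parity_gf_nth bit_of_nat_eq_0_iff)
qed

section \<open>Partitions with multiplicities \<open>j (pr + a) + p k\<close>\<close>

definition mult_lt4_partitions :: "nat \<Rightarrow> nat \<Rightarrow> (nat \<Rightarrow> nat) set" where
  "mult_lt4_partitions N u =
    {g. (\<forall>i. g i \<noteq> 0 \<longrightarrow> 1 \<le> i \<and> i \<le> N) \<and> (\<forall>i. g i < 4) \<and> (\<Sum>i=1..N. i * g i) = u}"

text \<open>A multiplicity \<open>j < 4\<close> of the part \<open>i + 1\<close> is written in binary as
  \<open>[i \<in> S] + 2 [i \<in> T]\<close>; the index shift matches \<open>distinct_gf Suc\<close>.\<close>

definition mult_bits :: "(nat \<Rightarrow> nat) \<Rightarrow> nat set \<times> nat set" where
  "mult_bits g = ({i. odd (g (Suc i))}, {i. 2 \<le> g (Suc i)})"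

definition two_bit :: "nat set \<Rightarrow> nat set \<Rightarrow> nat \<Rightarrow> nat" where
  "two_bit S T i = (if i \<in> S then 1 else 0) + (if i \<in> T then 2 else 0)"

definition mult_of_bits :: "nat set \<times> nat set \<Rightarrow> nat \<Rightarrow> nat" where
  "mult_of_bits = (\<lambda>(S, T) i. if i = 0 then 0 else two_bit S T (i - 1))"

lemma two_bit_digits:
  assumes "j < 4"
  shows "(if odd j then 1 else 0) + (if 2 \<le> j then 2 else 0) = (j::nat)"
proof -
  have "j \<in> {0, 1, 2, 3}"
    using assms by auto
  then show ?thesis
    by auto
qed

lemma sum_two_bit:
  assumes "S \<subseteq> {..<N}" "T \<subseteq> {..<N}"
  shows "(\<Sum>i<N. Suc i * two_bit S T i) = sum Suc S + 2 * sum Suc T"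
proof -
  have "(\<Sum>i<N. Suc i * two_bit S T i) =
      (\<Sum>i<N. if i \<in> S then Suc i else 0) + 2 * (\<Sum>i<N. if i \<in> T then Suc i else 0)"
    unfolding sum_distrib_left sum.distrib[symmetric] by (intro sum.cong) (auto simp: two_bit_def)
  also have "\<dots> = (\<Sum>i\<in>{..<N} \<inter> S. Suc i) + 2 * (\<Sum>i\<in>{..<N} \<inter> T. Suc i)"
    by (simp add: sum.inter_restrict)
  also have "\<dots> = sum Suc S + 2 * sum Suc T"
    using assms by (simp add: Int_absorb1)
  finally show ?thesis .
qed

lemma mult_bits_in_distinct_pairs:
  assumes g: "g \<in> mult_lt4_partitions N u"
  shows "mult_bits g \<in> {x \<in> {S. finite S} \<times> {S. finite S}. distinct_pair_weight x = u}"
proof -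
  obtain S T where ST: "mult_bits g = (S, T)" "S = {i. odd (g (Suc i))}" "T = {i. 2 \<le> g (Suc i)}"
    by (simp add: mult_bits_def)
  have support: "\<And>i. g i \<noteq> 0 \<Longrightarrow> 1 \<le> i \<and> i \<le> N"
    using g by (simp add: mult_lt4_partitions_def)
  have "i < N" if "odd (g (Suc i)) \<or> 2 \<le> g (Suc i)" for i
  proof -
    have "g (Suc i) \<noteq> 0"
      using that by (auto simp: odd_pos)
    then show ?thesis
      using support[of "Suc i"] by simp
  qed
  then have sub: "S \<subseteq> {..<N}" "T \<subseteq> {..<N}"
    unfolding ST by auto
  have "u = (\<Sum>i<N. Suc i * g (Suc i))"
    using g by (simp add: mult_lt4_partitions_def sum.atLeast1_atMost_eq)
  also have "\<dots> = (\<Sum>i<N. Suc i * two_bit S T i)"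
    using g by (intro sum.cong refl) (simp add: ST two_bit_def two_bit_digits mult_lt4_partitions_def)
  finally have "distinct_pair_weight (S, T) = u"
    using sum_two_bit[OF sub] by (simp add: distinct_pair_weight_def)
  then show ?thesis
    using sub finite_subset by (auto simp: ST(1))
qed

lemma mult_of_bits_in_mult_lt4_partitions:
  assumes x: "x \<in> {x \<in> {S. finite S} \<times> {S. finite S}. distinct_pair_weight x = u}" and "u \<le> N"
  shows "mult_of_bits x \<in> mult_lt4_partitions N u"
proof -
  obtain S T where ST: "x = (S, T)" "finite S" "finite T" and weight: "distinct_pair_weight (S, T) = u"
    using x by auto
  have sub: "S \<subseteq> {..<N}" "T \<subseteq> {..<N}"
    using member_le_sum[of _ S Suc] member_le_sum[of _ T Suc] ST weight \<open>u \<le> N\<close>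
    by (fastforce simp: distinct_pair_weight_def)+
  have "(\<Sum>i=1..N. i * mult_of_bits x i) = u"
    using weight sum_two_bit[OF sub] by (simp add: ST mult_of_bits_def sum.atLeast1_atMost_eq distinct_pair_weight_def)
  moreover have "1 \<le> i \<and> i \<le> N" if "mult_of_bits x i \<noteq> 0" for i
    using that sub by (auto simp: ST mult_of_bits_def two_bit_def split: if_splits)
  ultimately show ?thesis
    by (auto simp: mult_lt4_partitions_def mult_of_bits_def two_bit_def ST)
qed

lemma bij_mult_lt4_partitions_distinct_pairs:
  assumes "u \<le> N"
  shows "bij_betw mult_bits (mult_lt4_partitions N u)
      {x \<in> {S. finite S} \<times> {S. finite S}. distinct_pair_weight x = u}"
proof (rule bij_betw_byWitness[where f' = mult_of_bits])
  show "\<forall>g\<in>mult_lt4_partitions N u. mult_of_bits (mult_bits g) = g"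
  proof
    fix g
    assume "g \<in> mult_lt4_partitions N u"
    then have "g 0 = 0" "\<And>i. g i < 4"
      by (auto simp: mult_lt4_partitions_def)
    then show "mult_of_bits (mult_bits g) = g"
      by (auto simp: fun_eq_iff mult_of_bits_def mult_bits_def two_bit_def two_bit_digits gr0_conv_Suc)
  qed
  show "\<forall>x\<in>{x \<in> {S. finite S} \<times> {S. finite S}. distinct_pair_weight x = u}. mult_bits (mult_of_bits x) = x"
    by (auto simp: mult_of_bits_def mult_bits_def two_bit_def)
  show "mult_bits ` mult_lt4_partitions N u \<subseteq>
      {x \<in> {S. finite S} \<times> {S. finite S}. distinct_pair_weight x = u}"
    using mult_bits_in_distinct_pairs by blast
  show "mult_of_bits ` {x \<in> {S. finite S} \<times> {S. finite S}. distinct_pair_weight x = u} \<subseteq>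
      mult_lt4_partitions N u"
    using mult_of_bits_in_mult_lt4_partitions[OF _ assms] by blast
qed

context
  fixes p r a m :: nat
  assumes p_gt_3: "p > 3" and coprime_a_p: "coprime a p" and m_pos: "m \<ge> 1"
begin

lemma le_mult_pr_plus_a: "n \<le> (p * r + a) * n"
proof -
  have "p * r + a > 0"
    using coprime_a_p p_gt_3 by (cases "a = 0") auto
  then show ?thesis
    by (simp add: Suc_le_eq)
qed

lemma allowed_mult_digits_unique:
  assumes "j1 < 4" "j2 < 4" "j1 * (p * r + a) + p * k1 = j2 * (p * r + a) + p * k2"
  shows "j1 = j2 \<and> k1 = k2"
proof -
  have "[j * (p * r + a) + p * k = j * a] (mod p)" for j k
  proof -
    have "j * (p * r + a) + p * k = j * a + p * (j * r + k)"
      by (simp add: algebra_simps)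
    then show ?thesis
      by (simp add: cong_def)
  qed
  from cong_sym[OF this[of j1 k1]] this[of j2 k2] have "[j1 * a = j2 * a] (mod p)"
    unfolding assms(3) by (rule cong_trans)
  then have "[j1 = j2] (mod p)"
    using coprime_a_p by (simp add: cong_mult_rcancel_nat)
  then have "j1 = j2"
    using assms(1,2) p_gt_3 by (simp add: cong_less_modulus_unique_nat)
  then show ?thesis
    using assms(3) p_gt_3 by simp
qed

text \<open>The digits \<open>j < 4\<close>, \<open>k < m\<close> of an allowed multiplicity \<open>c = j (pr + a) + p k\<close>;
  they are unspecified for other \<open>c\<close>.\<close>

definition mult_j :: "nat \<Rightarrow> nat" where
  "mult_j c = (SOME j. j < 4 \<and> (\<exists>k<m. c = j * (p * r + a) + p * k))"

definition mult_k :: "nat \<Rightarrow> nat" where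
  "mult_k c = (SOME k. k < m \<and> c = mult_j c * (p * r + a) + p * k)"

lemma allowed_mult_digits:
  assumes "allowed_mult p r a m c"
  shows "mult_j c < 4" "mult_k c < m" "c = mult_j c * (p * r + a) + p * mult_k c"
proof -
  have "\<exists>j. j < 4 \<and> (\<exists>k<m. c = j * (p * r + a) + p * k)"
    using assms by (auto simp: allowed_mult_def)
  then have j: "mult_j c < 4 \<and> (\<exists>k<m. c = mult_j c * (p * r + a) + p * k)"
    unfolding mult_j_def by (rule someI_ex)
  then have "\<exists>k. k < m \<and> c = mult_j c * (p * r + a) + p * k"
    by blast
  then have "mult_k c < m \<and> c = mult_j c * (p * r + a) + p * mult_k c"
    unfolding mult_k_def by (rule someI_ex)
  with j show "mult_j c < 4" "mult_k c < m" "c = mult_j c * (p * r + a) + p * mult_k c"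
    by auto
qed

lemma allowed_mult_of_digits: "j < 4 \<Longrightarrow> k < m \<Longrightarrow> allowed_mult p r a m (j * (p * r + a) + p * k)"
  by (auto simp: allowed_mult_def)

lemma mult_digits_eq:
  assumes "j < 4" "k < m"
  shows "mult_j (j * (p * r + a) + p * k) = j" "mult_k (j * (p * r + a) + p * k) = k"
proof -
  have "j = mult_j (j * (p * r + a) + p * k) \<and> k = mult_k (j * (p * r + a) + p * k)"
    using allowed_mult_digits[OF allowed_mult_of_digits[OF assms]] assms
    by (intro allowed_mult_digits_unique) auto
  then show "mult_j (j * (p * r + a) + p * k) = j" "mult_k (j * (p * r + a) + p * k) = k"
    by simp_all
qed

lemma mult_digits_0: "mult_j 0 = 0" "mult_k 0 = 0"
  using mult_digits_eq[of 0 0] m_pos by simp_all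

definition restricted_partitions :: "nat \<Rightarrow> (nat \<Rightarrow> nat) set" where
  "restricted_partitions N = {f.
      (\<forall>i. f i \<noteq> 0 \<longrightarrow> 1 \<le> i \<and> i \<le> N) \<and>
      (\<Sum>i=1..N. i * f i) = N \<and>
      (\<forall>i\<in>{1..N}. allowed_mult p r a m (f i))}"

lemma b4_eq_card_restricted_partitions: "b4 p r a m N = card (restricted_partitions N)"
  by (simp add: b4_def restricted_partitions_def)

definition j_size :: "nat \<Rightarrow> (nat \<Rightarrow> nat) \<Rightarrow> nat" where
  "j_size N f = (\<Sum>i=1..N. i * mult_j (f i))"

definition k_parts :: "nat \<Rightarrow> nat \<Rightarrow> (nat \<Rightarrow> nat) set" where
  "k_parts N u = {h. (\<forall>i. h i \<noteq> 0 \<longrightarrow> 1 \<le> i \<and> i \<le> N) \<and> (\<forall>i. h i < m) \<and>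
      (p * r + a) * u + p * (\<Sum>i=1..N. i * h i) = N}"

lemma restricted_partition_digits:
  assumes "f \<in> restricted_partitions N"
  shows "mult_j (f i) < 4" "mult_k (f i) < m" "f i = mult_j (f i) * (p * r + a) + p * mult_k (f i)"
proof -
  have "allowed_mult p r a m (f i)"
  proof (cases "1 \<le> i \<and> i \<le> N")
    case False
    then have "f i = 0"
      using assms by (auto simp: restricted_partitions_def)
    show ?thesis
      unfolding \<open>f i = 0\<close> allowed_mult_def by (intro exI[of _ 0] conjI) (use m_pos in auto)
  qed (use assms in \<open>auto simp: restricted_partitions_def\<close>)
  then show "mult_j (f i) < 4" "mult_k (f i) < m" "f i = mult_j (f i) * (p * r + a) + p * mult_k (f i)"
    by (rule allowed_mult_digits)+
qed

lemma restricted_partition_size: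
  assumes "f \<in> restricted_partitions N"
  shows "N = (p * r + a) * j_size N f + p * (\<Sum>i=1..N. i * mult_k (f i))"
proof -
  have "N = (\<Sum>i=1..N. i * f i)"
    using assms by (simp add: restricted_partitions_def)
  also have "\<dots> = (\<Sum>i=1..N. i * (mult_j (f i) * (p * r + a) + p * mult_k (f i)))"
    using restricted_partition_digits(3)[OF assms] by simp
  finally show ?thesis
    by (simp add: j_size_def sum.distrib sum_distrib_left algebra_simps)
qed

lemma digits_in_fibre:
  assumes f: "f \<in> restricted_partitions N" and "j_size N f = u"
  shows "mult_j \<circ> f \<in> mult_lt4_partitions N u" "mult_k \<circ> f \<in> k_parts N u"
proof -
  have "f i \<noteq> 0" if "mult_j (f i) \<noteq> 0 \<or> mult_k (f i) \<noteq> 0" for i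
    using that mult_digits_0 by metis
  moreover have "f i \<noteq> 0 \<Longrightarrow> 1 \<le> i \<and> i \<le> N" for i
    using f by (simp add: restricted_partitions_def)
  ultimately show "mult_j \<circ> f \<in> mult_lt4_partitions N u" "mult_k \<circ> f \<in> k_parts N u"
    using assms restricted_partition_digits(1,2) restricted_partition_size[OF f]
    by (auto simp: mult_lt4_partitions_def k_parts_def j_size_def)
qed

lemma of_digits_in_fibre:
  assumes g: "g \<in> mult_lt4_partitions N u" and h: "h \<in> k_parts N u"
  defines "f \<equiv> \<lambda>i. g i * (p * r + a) + p * h i"
  shows "f \<in> restricted_partitions N" "j_size N f = u"
proof -
  have "(\<Sum>i=1..N. i * f i) = (p * r + a) * (\<Sum>i=1..N. i * g i) + p * (\<Sum>i=1..N. i * h i)"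
    by (simp add: f_def sum.distrib sum_distrib_left algebra_simps)
  moreover have "allowed_mult p r a m (f i)" for i
    using g h by (simp add: f_def allowed_mult_of_digits mult_lt4_partitions_def k_parts_def)
  ultimately show "f \<in> restricted_partitions N"
    using g h by (auto simp: restricted_partitions_def mult_lt4_partitions_def k_parts_def f_def)
  have "mult_j (f i) = g i" for i
    using g h by (simp add: f_def mult_lt4_partitions_def k_parts_def mult_digits_eq)
  then show "j_size N f = u"
    using g by (simp add: j_size_def mult_lt4_partitions_def)
qed

lemma bij_restricted_partitions_fibre:
  "bij_betw (\<lambda>f. (mult_j \<circ> f, mult_k \<circ> f)) {f \<in> restricted_partitions N. j_size N f = u}
      (mult_lt4_partitions N u \<times> k_parts N u)"
proof (rule bij_betw_byWitness[where f' = "\<lambda>(g, h) i. g i * (p * r + a) + p * h i"])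
  show "\<forall>f\<in>{f \<in> restricted_partitions N. j_size N f = u}.
      (\<lambda>(g, h) i. g i * (p * r + a) + p * h i) (mult_j \<circ> f, mult_k \<circ> f) = f"
    using restricted_partition_digits(3) by (auto simp: fun_eq_iff)
  show "\<forall>x\<in>mult_lt4_partitions N u \<times> k_parts N u.
      (\<lambda>f. (mult_j \<circ> f, mult_k \<circ> f)) ((\<lambda>(g, h) i. g i * (p * r + a) + p * h i) x) = x"
    by (auto simp: mult_lt4_partitions_def k_parts_def mult_digits_eq comp_def)
  show "(\<lambda>f. (mult_j \<circ> f, mult_k \<circ> f)) ` {f \<in> restricted_partitions N. j_size N f = u}
      \<subseteq> mult_lt4_partitions N u \<times> k_parts N u"
    using digits_in_fibre by blast
  show "(\<lambda>(g, h) i. g i * (p * r + a) + p * h i) ` (mult_lt4_partitions N u \<times> k_parts N u)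
      \<subseteq> {f \<in> restricted_partitions N. j_size N f = u}"
    using of_digits_in_fibre by fast
qed

lemma odd_fibre_imp_cong_triangular:
  assumes "odd (card {f \<in> restricted_partitions N. j_size N f = u})"
  shows "[N = a * u] (mod p)" "\<exists>c. 2 * c\<^sup>2 + c = int u"
proof -
  have card_fibre: "card {f \<in> restricted_partitions N. j_size N f = u} =
      card (mult_lt4_partitions N u) * card (k_parts N u)"
    using bij_betw_same_card[OF bij_restricted_partitions_fibre] by (simp add: card_cartesian_product)
  then have "k_parts N u \<noteq> {}"
    using assms by auto
  then obtain h where "h \<in> k_parts N u"
    by blast
  then have size: "(p * r + a) * u + p * (\<Sum>i=1..N. i * h i) = N"
    by (simp add: k_parts_def)
  then have "N = a * u + p * (r * u + (\<Sum>i=1..N. i * h i))"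
    by (simp add: algebra_simps)
  then show "[N = a * u] (mod p)"
    by (metis cong_def mod_mult_self2)
  have "u \<le> N"
    using size le_mult_pr_plus_a[of u] by linarith
  have "odd (card (mult_lt4_partitions N u))"
    using assms card_fibre by simp
  then show "\<exists>c. 2 * c\<^sup>2 + c = int u"
    using bij_betw_same_card[OF bij_mult_lt4_partitions_distinct_pairs[OF \<open>u \<le> N\<close>]]
    by (intro odd_card_distinct_pairs_imp_triangular) simp
qed

lemma odd_b4_imp_cong_triangular:
  assumes "odd (b4 p r a m N)"
  shows "\<exists>u. [N = a * u] (mod p) \<and> (\<exists>c. 2 * c\<^sup>2 + c = int u)"
proof -
  have finite: "finite (restricted_partitions N)"
    using assms card.infinite by (fastforce simp: b4_eq_card_restricted_partitions)
  have "card (restricted_partitions N) =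
      (\<Sum>u\<in>{0..N}. card {f \<in> restricted_partitions N. j_size N f = u})"
  proof -
    have "j_size N f \<le> N" if "f \<in> restricted_partitions N" for f
      using restricted_partition_size[OF that] le_mult_pr_plus_a[of "j_size N f"] by linarith
    then show ?thesis
      using card_eq_sum_card_fibres[of "restricted_partitions N" "\<lambda>_. True" "{0..N}" "j_size N"] finite
      by simp
  qed
  moreover have "even (\<Sum>u\<in>{0..N}. card {f \<in> restricted_partitions N. j_size N f = u})"
    if "\<forall>u\<in>{0..N}. even (card {f \<in> restricted_partitions N. j_size N f = u})"
    using that by (intro dvd_sum) simp
  ultimately obtain u where "odd (card {f \<in> restricted_partitions N. j_size N f = u})"
    using assms by (auto simp: b4_eq_card_restricted_partitions)
  then show ?thesis
    using odd_fibre_imp_cong_triangular by blast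
qed

end

lemma quad_res_of_triangular:
  fixes q a' ainv N t u c :: int
  assumes "[a' * ainv = 1] (mod q)" and "[N = a' * u] (mod q)" and "[N = t] (mod q)"
    and "u = 2 * c\<^sup>2 + c"
  shows "QuadRes q (8 * t * ainv + 1)"
proof -
  have "[8 * t * ainv + 1 = 8 * N * ainv + 1] (mod q)"
    using cong_sym[OF assms(3)] by (intro cong_add cong_mult cong_refl)
  also have "[8 * N * ainv + 1 = 8 * (a' * u) * ainv + 1] (mod q)"
    using assms(2) by (intro cong_add cong_mult cong_refl)
  also have "8 * (a' * u) * ainv + 1 = 8 * u * (a' * ainv) + 1"
    by (simp add: algebra_simps)
  also have "[8 * u * (a' * ainv) + 1 = 8 * u * 1 + 1] (mod q)"
    using assms(1) by (intro cong_add cong_mult cong_refl)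
  also have "8 * u * 1 + 1 = (4 * c + 1)\<^sup>2"
    using assms(4) by (simp add: power2_eq_square algebra_simps)
  finally show ?thesis
    unfolding QuadRes_def by (blast intro: cong_sym)
qed

theorem theorem4p3:
  fixes p r a m :: nat and t ainv :: int
  assumes "prime p" and "p \<ge> 5" and "a > 0" and "coprime a p" and "m \<ge> 1"
    and "[int a * ainv = 1] (mod int p)"
    and "\<not> QuadRes (int p) (8 * t * ainv + 1)"
  shows "\<forall>n::nat. int p * int n + t \<ge> 0 \<longrightarrow> even (b4 p r a m (nat (int p * int n + t)))"
proof (intro allI impI)
  fix n :: nat
  define N where "N = nat (int p * int n + t)"
  assume "int p * int n + t \<ge> 0"
  then have N: "int N = int p * int n + t"
    by (simp add: N_def)
  show "even (b4 p r a m N)"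
  proof (rule ccontr)
    assume "odd (b4 p r a m N)"
    moreover have "p > 3"
      using assms(2) by simp
    ultimately obtain u c where "[N = a * u] (mod p)" and "2 * c\<^sup>2 + c = int u"
      using odd_b4_imp_cong_triangular assms(4,5) by blast
    moreover have "[int N = t] (mod int p)"
      by (simp add: N cong_def)
    ultimately have "QuadRes (int p) (8 * t * ainv + 1)"
      using assms(6) by (intro quad_res_of_triangular[of "int a" ainv _ "int N" "int u" _ c])
        (simp_all add: cong_int_iff[symmetric])
    with assms(7) show False ..
  qed
qed

end
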